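(* Let $(X,\Omega)$ be a measurable space, $\mathcal M$ the set of finite measures on $X$, and $\mathcal N\subset\Omega$ a candidate collection of null sets. Let $\mathcal S=\{\mu\in\mathcal M:\mu(E)=0\text{ for all }E\in\mathcal N\}$ and $\mathcal S^\perp=\{\nu\in\mathcal M:\nu\perp\mu\text{ for all }\mu\in\mathcal S\}$. Then $\mathcal M=\mathcal S\oplus\mathcal S^\perp$, i.e. every $\nu\in\mathcal M$ can be written uniquely as $\nu=\nu_1+\nu_2$ with $\nu_1\in\mathcal S$ and $\nu_2\in\mathcal S^\perp$.
   Context: A collection $\mathcal N\subset\Omega$ is a candidate collection of null sets if (1) $E\in\mathcal N$, $F\in\Omega$, $F\subset E$ imply $F\in\mathcal N$, and (2) the union of any countable subcollection of $\mathcal N$ belongs to $\mathcal N$. $\nu\perp\mu$ denotes mutual singularity. *)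

theory Defs
  imports "HOL-Analysis.Analysis"
begin

definition mutually_singular :: "'a measure \<Rightarrow> 'a measure \<Rightarrow> bool" where
  "mutually_singular \<nu> \<mu> \<longleftrightarrow>
     (\<exists>A \<in> sets \<mu>. emeasure \<nu> A = 0 \<and> emeasure \<mu> (space \<mu> - A) = 0)"

definition candidate_null_sets :: "'a measure \<Rightarrow> 'a set set \<Rightarrow> bool" where
  "candidate_null_sets M Nc \<longleftrightarrow>
     Nc \<subseteq> sets M \<and>
     (\<forall>E F. E \<in> Nc \<and> F \<in> sets M \<and> F \<subseteq> E \<longrightarrow> F \<in> Nc) \<and>
     (\<forall>C. countable C \<and> C \<subseteq> Nc \<longrightarrow> \<Union>C \<in> Nc)"

definition finite_measures_on :: "'a measure \<Rightarrow> 'a measure set" where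
  "finite_measures_on M = {\<nu>. sets \<nu> = sets M \<and> finite_measure \<nu>}"

definition null_respecting :: "'a measure \<Rightarrow> 'a set set \<Rightarrow> 'a measure set" where
  "null_respecting M Nc = {\<mu> \<in> finite_measures_on M. \<forall>E \<in> Nc. emeasure \<mu> E = 0}"

definition singular_complement :: "'a measure \<Rightarrow> 'a set set \<Rightarrow> 'a measure set" where
  "singular_complement M Nc = {\<nu> \<in> finite_measures_on M.
      \<forall>\<mu> \<in> null_respecting M Nc. mutually_singular \<nu> \<mu>}"

end

theory Submission
  imports Defs
begin

text \<open>Let \<open>E \<in> \<N>\<close> be a set of maximal \<open>\<nu>\<close>-measure; it exists because \<open>\<N>\<close> is closed under
  countable unions and \<open>\<nu>\<close> is finite, and every \<open>F \<in> \<N>\<close> is \<open>\<nu>\<close>-null outside \<open>E\<close>. The restriction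
  of \<open>\<nu>\<close> to the complement of \<open>E\<close> then annihilates \<open>\<N>\<close>, while the restriction to \<open>E\<close> is
  singular to every measure annihilating \<open>\<N>\<close>, since these all vanish on \<open>E\<close>. Conversely, in any
  decomposition \<open>\<nu> = \<nu>\<^sub>1 + \<nu>\<^sub>2\<close> the part \<open>\<nu>\<^sub>1\<close> vanishes on \<open>E\<close>, and \<open>\<nu>\<^sub>2 \<le> \<nu>\<close> is singular to the
  restriction of \<open>\<nu>\<close> to the complement of \<open>E\<close>, so it vanishes there; this forces uniqueness.\<close>

lemma (in finite_measure) countable_Union_closed_measure_max:
  assumes "C \<subseteq> sets M" and Union_closed: "\<And>D. countable D \<Longrightarrow> D \<subseteq> C \<Longrightarrow> \<Union>D \<in> C"
  shows "\<exists>E\<in>C. \<forall>F\<in>C. measure M F \<le> measure M E"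
proof -
  define s where "s = (SUP F\<in>C. measure M F)"
  have "{} \<in> C" using Union_closed[of "{}"] by simp
  then have nonempty: "measure M ` C \<noteq> {}" by blast
  have bdd: "bdd_above (measure M ` C)"
    using bounded_measure by (auto intro!: bdd_aboveI[of _ "measure M (space M)"])
  have "\<exists>F\<in>C. s - 1 / Suc n < measure M F" for n :: nat
    using less_cSup_iff[OF nonempty bdd, of "s - 1 / Suc n"] by (simp add: s_def)
  then obtain F where F: "\<And>n. F n \<in> C" "\<And>n. s - 1 / Suc n < measure M (F n)"
    by metis
  define E where "E = \<Union>(range F)"
  have "E \<in> C" unfolding E_def using Union_closed[of "range F"] F(1) by auto
  have "s - 1 / Suc n \<le> measure M E" for n
  proof -
    have "measure M (F n) \<le> measure M E"
      using \<open>E \<in> C\<close> F(1) assms(1) by (intro finite_measure_mono) (auto simp: E_def)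
    then show ?thesis using F(2)[of n] by linarith
  qed
  moreover have "(\<lambda>n. s - 1 / Suc n) \<longlonglongrightarrow> s - 0"
    by (intro tendsto_diff tendsto_const LIMSEQ_inverse_real_of_nat[unfolded inverse_eq_divide])
  ultimately have "s \<le> measure M E"
    by (intro LIMSEQ_le_const2) auto
  moreover have "measure M F \<le> s" if "F \<in> C" for F
    unfolding s_def using bdd that by (intro cSup_upper) auto
  ultimately show ?thesis using \<open>E \<in> C\<close> by force
qed

lemma (in finite_measure) countable_Union_closed_essential_Union:
  assumes "C \<subseteq> sets M" and Union_closed: "\<And>D. countable D \<Longrightarrow> D \<subseteq> C \<Longrightarrow> \<Union>D \<in> C"
  shows "\<exists>E\<in>C. \<forall>F\<in>C. F - E \<in> null_sets M"
proof -
  obtain E where "E \<in> C" and E_max: "\<And>F. F \<in> C \<Longrightarrow> measure M F \<le> measure M E"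
    using countable_Union_closed_measure_max[OF assms] by blast
  have "F - E \<in> null_sets M" if "F \<in> C" for F
  proof -
    have "F \<union> E \<in> C" using Union_closed[of "{F, E}"] \<open>F \<in> C\<close> \<open>E \<in> C\<close> by simp
    moreover have "measure M (F \<union> E) = measure M E + measure M (F - E)"
      using \<open>F \<in> C\<close> \<open>E \<in> C\<close> assms(1) finite_measure_Union[of E "F - E"]
      by (auto simp: Un_Diff_cancel2 Un_commute)
    ultimately have "measure M (F - E) = 0"
      using E_max[of "F \<union> E"] by (simp add: measure_nonneg antisym)
    then show ?thesis
      using \<open>F \<in> C\<close> \<open>E \<in> C\<close> assms(1) by (auto simp: emeasure_eq_measure null_sets_def)
  qed
  then show ?thesis using \<open>E \<in> C\<close> by blast
qed

lemma mutually_singular_dominated_vanishes: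
  assumes "sets \<mu> = sets \<nu>" and dominated: "\<And>X. X \<in> sets \<nu> \<Longrightarrow> emeasure \<mu> X \<le> emeasure \<nu> X"
    and "mutually_singular \<mu> (density \<nu> (indicator S))" and "S \<in> sets \<nu>"
  shows "emeasure \<mu> S = 0"
proof -
  obtain B where B: "B \<in> sets \<nu>" "emeasure \<mu> B = 0" "emeasure \<nu> (S \<inter> (space \<nu> - B)) = 0"
    using assms(3,4) unfolding mutually_singular_def by (auto simp: emeasure_restricted)
  have "emeasure \<mu> S \<le> emeasure \<mu> (S \<inter> B) + emeasure \<mu> (S - B)"
    using assms(1,4) B(1) by (intro order.trans[OF _ emeasure_subadditive]) (auto intro!: emeasure_mono)
  also have "emeasure \<mu> (S \<inter> B) \<le> emeasure \<mu> B"
    using assms(1,4) B(1) by (intro emeasure_mono) auto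
  also have "emeasure \<mu> (S - B) \<le> emeasure \<nu> (S - B)"
    using assms(4) B(1) by (intro dominated) auto
  also have "S - B = S \<inter> (space \<nu> - B)"
    using sets.sets_into_space[OF assms(4)] by blast
  finally show ?thesis using B by simp
qed

lemma density_indicator_split_unique:
  assumes "sets \<nu>\<^sub>1 = sets \<nu>" "sets \<nu>\<^sub>2 = sets \<nu>" "E \<in> sets \<nu>"
    and "emeasure \<nu>\<^sub>1 E = 0" "emeasure \<nu>\<^sub>2 (space \<nu> - E) = 0"
    and sum: "\<And>A. A \<in> sets \<nu> \<Longrightarrow> emeasure \<nu> A = emeasure \<nu>\<^sub>1 A + emeasure \<nu>\<^sub>2 A"
  shows "\<nu>\<^sub>1 = density \<nu> (indicator (space \<nu> - E))" and "\<nu>\<^sub>2 = density \<nu> (indicator E)"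
proof -
  have null: "E \<in> null_sets \<nu>\<^sub>1" "space \<nu> - E \<in> null_sets \<nu>\<^sub>2"
    using assms(1-5) by (simp_all add: null_sets_def)
  have \<nu>\<^sub>1_eq: "emeasure \<nu>\<^sub>1 A = emeasure \<nu> ((space \<nu> - E) \<inter> A)"
    and \<nu>\<^sub>2_eq: "emeasure \<nu>\<^sub>2 A = emeasure \<nu> (E \<inter> A)" if A: "A \<in> sets \<nu>" for A
  proof -
    have A_space: "A - (space \<nu> - E) = E \<inter> A" "(space \<nu> - E) \<inter> A = A - E"
      using sets.sets_into_space[OF A] by blast+
    have "emeasure \<nu>\<^sub>1 (A - E) = emeasure \<nu>\<^sub>1 A"
      using null(1) A assms(1) by (simp add: emeasure_Diff_null_set)
    moreover have "emeasure \<nu>\<^sub>1 (E \<inter> A) = 0"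
      using null(1) A assms(1,3) by (intro null_sets_subset[THEN null_setsD1, of E]) auto
    moreover have "emeasure \<nu>\<^sub>2 (E \<inter> A) = emeasure \<nu>\<^sub>2 A"
      using emeasure_Diff_null_set[OF null(2), of A] A assms(2) A_space(1) by simp
    moreover have "emeasure \<nu>\<^sub>2 (A - E) = 0"
      using null(2) A assms(2,3) A_space(2) by (intro null_sets_subset[THEN null_setsD1]) auto
    ultimately show "emeasure \<nu>\<^sub>1 A = emeasure \<nu> ((space \<nu> - E) \<inter> A)"
      and "emeasure \<nu>\<^sub>2 A = emeasure \<nu> (E \<inter> A)"
      using sum[of "A - E"] sum[of "E \<inter> A"] A assms(3) A_space(2) by simp_all
  qed
  show "\<nu>\<^sub>1 = density \<nu> (indicator (space \<nu> - E))"
    by (rule measure_eqI) (use assms(1,3) \<nu>\<^sub>1_eq in \<open>simp_all add: emeasure_restricted\<close>)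
  show "\<nu>\<^sub>2 = density \<nu> (indicator E)"
    by (rule measure_eqI) (use assms(2,3) \<nu>\<^sub>2_eq in \<open>simp_all add: emeasure_restricted\<close>)
qed

lemma density_indicator_finite_measures_on:
  assumes "\<nu> \<in> finite_measures_on M" and "S \<in> sets M"
  shows "density \<nu> (indicator S) \<in> finite_measures_on M"
  using assms finite_measure.finite_measure_restricted[of \<nu> S]
  by (auto simp: finite_measures_on_def)

lemma density_indicator_Diff_null_respecting:
  assumes "\<nu> \<in> finite_measures_on M" and "E \<in> sets M" and "Nc \<subseteq> sets M"
    and null_outside: "\<And>F. F \<in> Nc \<Longrightarrow> F - E \<in> null_sets \<nu>"
  shows "density \<nu> (indicator (space M - E)) \<in> null_respecting M Nc"
proof -
  have "sets \<nu> = sets M" using assms(1) by (simp add: finite_measures_on_def)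
  have "emeasure (density \<nu> (indicator (space M - E))) F = 0" if "F \<in> Nc" for F
  proof -
    have "F \<in> sets M" using that assms(3) by blast
    then have "(space M - E) \<inter> F = F - E" using sets.sets_into_space by blast
    then show ?thesis
      using \<open>F \<in> sets M\<close> \<open>sets \<nu> = sets M\<close> assms(2) null_outside[OF that]
      by (subst emeasure_restricted) auto
  qed
  then show ?thesis
    using assms by (auto simp: null_respecting_def intro!: density_indicator_finite_measures_on)
qed

lemma density_indicator_singular_complement:
  assumes "\<nu> \<in> finite_measures_on M" and "E \<in> Nc" and "Nc \<subseteq> sets M"
  shows "density \<nu> (indicator E) \<in> singular_complement M Nc"
  unfolding singular_complement_def
proof (intro CollectI conjI ballI)
  have "E \<in> sets M" and sets_\<nu>: "sets \<nu> = sets M"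
    using assms by (auto simp: finite_measures_on_def)
  show "density \<nu> (indicator E) \<in> finite_measures_on M"
    using assms(1) \<open>E \<in> sets M\<close> by (rule density_indicator_finite_measures_on)
  fix \<mu> assume "\<mu> \<in> null_respecting M Nc"
  then have sets_\<mu>: "sets \<mu> = sets M" and "emeasure \<mu> E = 0"
    using assms(2) by (auto simp: null_respecting_def finite_measures_on_def)
  have "space \<mu> - (space M - E) = E"
    using sets_eq_imp_space_eq[OF sets_\<mu>] sets.sets_into_space[OF \<open>E \<in> sets M\<close>] by blast
  moreover have "emeasure (density \<nu> (indicator E)) (space M - E) = 0"
    using \<open>E \<in> sets M\<close> sets_\<nu> by (simp add: emeasure_restricted)
  moreover have "space M - E \<in> sets \<mu>" using \<open>E \<in> sets M\<close> sets_\<mu> by simp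
  ultimately show "mutually_singular (density \<nu> (indicator E)) \<mu>"
    unfolding mutually_singular_def using \<open>emeasure \<mu> E = 0\<close> by metis
qed

lemma emeasure_density_indicator_add:
  assumes "S \<in> sets \<nu>" and "A \<in> sets \<nu>"
  shows "emeasure \<nu> A =
    emeasure (density \<nu> (indicator (space \<nu> - S))) A + emeasure (density \<nu> (indicator S)) A"
proof -
  have "(space \<nu> - S) \<inter> A \<union> S \<inter> A = A" and "(space \<nu> - S) \<inter> A \<inter> (S \<inter> A) = {}"
    using sets.sets_into_space[OF assms(2)] by blast+
  then have "emeasure \<nu> A = emeasure \<nu> ((space \<nu> - S) \<inter> A) + emeasure \<nu> (S \<inter> A)"
    using plus_emeasure[of "(space \<nu> - S) \<inter> A" \<nu> "S \<inter> A"] assms by simp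
  then show ?thesis using assms by (simp add: emeasure_restricted)
qed

lemma null_respecting_singular_decomposition_unique:
  assumes "\<nu> \<in> finite_measures_on M" and "E \<in> Nc" and "Nc \<subseteq> sets M"
    and null_outside: "\<And>F. F \<in> Nc \<Longrightarrow> F - E \<in> null_sets \<nu>"
    and \<nu>\<^sub>1: "\<nu>\<^sub>1 \<in> null_respecting M Nc" and \<nu>\<^sub>2: "\<nu>\<^sub>2 \<in> singular_complement M Nc"
    and sum: "\<forall>A \<in> sets M. emeasure \<nu> A = emeasure \<nu>\<^sub>1 A + emeasure \<nu>\<^sub>2 A"
  shows "\<nu>\<^sub>1 = density \<nu> (indicator (space M - E))" and "\<nu>\<^sub>2 = density \<nu> (indicator E)"
proof -
  have sets_\<nu>: "sets \<nu> = sets M" using assms(1) by (simp add: finite_measures_on_def)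
  then have space_\<nu>: "space \<nu> = space M" by (rule sets_eq_imp_space_eq)
  have sets: "sets \<nu>\<^sub>1 = sets \<nu>" "sets \<nu>\<^sub>2 = sets \<nu>" "E \<in> sets \<nu>"
    using \<nu>\<^sub>1 \<nu>\<^sub>2 assms(2,3) sets_\<nu>
    by (auto simp: null_respecting_def singular_complement_def finite_measures_on_def)
  have "emeasure \<nu>\<^sub>1 E = 0" using \<nu>\<^sub>1 assms(2) by (auto simp: null_respecting_def)
  moreover have "emeasure \<nu>\<^sub>2 (space \<nu> - E) = 0"
  proof (rule mutually_singular_dominated_vanishes)
    show "emeasure \<nu>\<^sub>2 X \<le> emeasure \<nu> X" if "X \<in> sets \<nu>" for X
      using sum that sets_\<nu> by auto
    have "density \<nu> (indicator (space M - E)) \<in> null_respecting M Nc"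
      using assms(1-4) sets(3) sets_\<nu> by (intro density_indicator_Diff_null_respecting) auto
    then show "mutually_singular \<nu>\<^sub>2 (density \<nu> (indicator (space \<nu> - E)))"
      using \<nu>\<^sub>2 space_\<nu> by (auto simp: singular_complement_def)
  qed (use sets in auto)
  moreover have "emeasure \<nu> A = emeasure \<nu>\<^sub>1 A + emeasure \<nu>\<^sub>2 A" if "A \<in> sets \<nu>" for A
    using sum that sets_\<nu> by blast
  ultimately show "\<nu>\<^sub>1 = density \<nu> (indicator (space M - E))" "\<nu>\<^sub>2 = density \<nu> (indicator E)"
    using density_indicator_split_unique[OF sets] unfolding space_\<nu> by blast+
qed

theorem lemma5p4:
  fixes M :: "'a measure" and Nc :: "'a set set"
  assumes "candidate_null_sets M Nc"
    and "\<nu> \<in> finite_measures_on M"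
  shows "\<exists>!p. fst p \<in> null_respecting M Nc \<and> snd p \<in> singular_complement M Nc \<and>
              (\<forall>A \<in> sets M. emeasure \<nu> A = emeasure (fst p) A + emeasure (snd p) A)"
proof -
  have Nc: "Nc \<subseteq> sets M" "\<And>D. countable D \<Longrightarrow> D \<subseteq> Nc \<Longrightarrow> \<Union>D \<in> Nc"
    using assms(1) unfolding candidate_null_sets_def by blast+
  have sets_\<nu>: "sets \<nu> = sets M" and "finite_measure \<nu>"
    using assms(2) by (auto simp: finite_measures_on_def)
  then have space_\<nu>: "space \<nu> = space M" by (intro sets_eq_imp_space_eq)
  obtain E where "E \<in> Nc" and null_outside: "\<And>F. F \<in> Nc \<Longrightarrow> F - E \<in> null_sets \<nu>"
    using finite_measure.countable_Union_closed_essential_Union[OF \<open>finite_measure \<nu>\<close>] Nc sets_\<nu>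
    by metis
  then have "E \<in> sets M" using Nc(1) by blast
  let ?\<nu>\<^sub>1 = "density \<nu> (indicator (space M - E))" and ?\<nu>\<^sub>2 = "density \<nu> (indicator E)"
  show ?thesis
  proof (rule ex1I[of _ "(?\<nu>\<^sub>1, ?\<nu>\<^sub>2)"], safe)
    show "fst (?\<nu>\<^sub>1, ?\<nu>\<^sub>2) \<in> null_respecting M Nc"
      using assms(2) \<open>E \<in> sets M\<close> Nc(1) null_outside
      by (auto intro: density_indicator_Diff_null_respecting)
    show "snd (?\<nu>\<^sub>1, ?\<nu>\<^sub>2) \<in> singular_complement M Nc"
      using assms(2) \<open>E \<in> Nc\<close> Nc(1) by (auto intro: density_indicator_singular_complement)
    show "emeasure \<nu> A = emeasure (fst (?\<nu>\<^sub>1, ?\<nu>\<^sub>2)) A + emeasure (snd (?\<nu>\<^sub>1, ?\<nu>\<^sub>2)) A"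
      if "A \<in> sets M" for A
      using emeasure_density_indicator_add[of E \<nu> A] that \<open>E \<in> sets M\<close> sets_\<nu> space_\<nu> by simp
  qed (use null_respecting_singular_decomposition_unique[OF assms(2) \<open>E \<in> Nc\<close> Nc(1) null_outside]
      in \<open>auto simp: prod_eq_iff\<close>)
qed

end
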